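(* For any oriented tree-structure $\psi$, the $R$-linear map $\nu_0:\mathcal{T}_0(\psi)\to\mathcal{T}_0(\psi)\otimes\mathcal{T}_0(\psi)$ given on generators by $$\nu_0(T,t)=\sum_{e\in\operatorname{edg}(T)}\Big((T^1_e,t|_{T^1_e})\otimes(T^2_e,t|_{T^2_e})-(T^2_e,t|_{T^2_e})\otimes(T^1_e,t|_{T^1_e})\Big)$$ is a Lie cobracket.
   Context: $R$ commutative ring with unit. A Lie cobracket on an $R$-module $A$ is an $R$-linear $\nu:A\to A\otimes A$ with $\operatorname{Perm}\circ\nu=-\nu$ ($\operatorname{Perm}(x\otimes y)=y\otimes x$) and $(\mathrm{id}+\tau+\tau^2)(\mathrm{id}\otimes\nu)\nu=0$, $\tau(x\otimes y\otimes z)=z\otimes x\otimes y$. An oriented tree is a finite tree with oriented edges; its subtrees (trees formed by some of its vertices and edges) inherit orientations. $OTrees$ is the category of oriented trees with orientation-preserving embeddings (homeomorphisms onto subtrees, mapping vertices to vertices and edges to edges). An oriented tree-structure is a contravariant functor $\psi$ from $OTrees$ to sets; an oriented $\psi$-tree is a pair $(T,t)$, $t\in\psi(T)$; $(T,t)$ and $(\tilde T,\tilde t)$ are homeomorphic if there is an (orientation-preserving) homeomorphism $j:T\to\tilde T$ with $\psi(j)(\tilde t)=t$; $t|_{T'}=\psi(\iota)(t)$ for the inclusion $\iota:T'\to T$. $\mathcal{T}_0(\psi)$ is the free $R$-module on homeomorphism classes of oriented $\psi$-trees. For an edge $e$, removing its interior leaves two subtrees $T^1_e,T^2_e$, numbered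 so that $e$ is directed from a vertex of $T^2_e$ to a vertex of $T^1_e$. *)

theory Defs
  imports Main "HOL-Library.FuncSet"
begin

type_synonym otree = "nat set \<times> (nat \<times> nat) set"

definition verts :: "otree \<Rightarrow> nat set" where "verts T = fst T"
definition edgs :: "otree \<Rightarrow> (nat \<times> nat) set" where "edgs T = snd T"

definition is_otree :: "otree \<Rightarrow> bool" where
  "is_otree T \<longleftrightarrow> finite (verts T) \<and> verts T \<noteq> {} \<and> edgs T \<subseteq> verts T \<times> verts T
     \<and> (\<forall>u\<in>verts T. \<forall>v\<in>verts T. (u, v) \<in> (edgs T \<union> (edgs T)\<inverse>)\<^sup>*)
     \<and> card (edgs T) + 1 = card (verts T)"

text \<open>Orientation-preserving embeddings S -> T (morphisms of OTrees), given by their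
  (extensional) vertex map; the edge map is induced.\<close>
definition is_emb :: "otree \<Rightarrow> otree \<Rightarrow> (nat \<Rightarrow> nat) \<Rightarrow> bool" where
  "is_emb S T f \<longleftrightarrow> is_otree S \<and> is_otree T \<and> f \<in> extensional (verts S)
     \<and> inj_on f (verts S) \<and> f ` verts S \<subseteq> verts T
     \<and> (\<forall>(u, v)\<in>edgs S. (f u, f v) \<in> edgs T)"

definition is_iso :: "otree \<Rightarrow> otree \<Rightarrow> (nat \<Rightarrow> nat) \<Rightarrow> bool" where
  "is_iso S T f \<longleftrightarrow> is_emb S T f \<and> f ` verts S = verts T
     \<and> (\<lambda>(u, v). (f u, f v)) ` edgs S = edgs T"

text \<open>An oriented tree-structure: contravariant functor OTrees -> Sets, given by the
  object map obj and the morphism map mor S T f : obj T -> obj S.\<close>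
definition tree_structure :: "(otree \<Rightarrow> 'a set) \<Rightarrow> (otree \<Rightarrow> otree \<Rightarrow> (nat \<Rightarrow> nat) \<Rightarrow> 'a \<Rightarrow> 'a) \<Rightarrow> bool" where
  "tree_structure obj mor \<longleftrightarrow>
     (\<forall>S T f. is_emb S T f \<longrightarrow> (\<forall>x\<in>obj T. mor S T f x \<in> obj S))
   \<and> (\<forall>T. is_otree T \<longrightarrow> (\<forall>x\<in>obj T. mor T T (restrict id (verts T)) x = x))
   \<and> (\<forall>S T U f g. is_emb S T f \<longrightarrow> is_emb T U g \<longrightarrow>
        (\<forall>x\<in>obj U. mor S U (compose (verts S) g f) x = mor S T f (mor T U g x)))"

definition restr :: "(otree \<Rightarrow> otree \<Rightarrow> (nat \<Rightarrow> nat) \<Rightarrow> 'a \<Rightarrow> 'a) \<Rightarrow> otree \<Rightarrow> otree \<Rightarrow> 'a \<Rightarrow> 'a" where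
  "restr mor T S t = mor S T (restrict id (verts S)) t"

definition psi_trees :: "(otree \<Rightarrow> 'a set) \<Rightarrow> (otree \<times> 'a) set" where
  "psi_trees obj = {(T, t). is_otree T \<and> t \<in> obj T}"

definition homeo :: "(otree \<Rightarrow> 'a set) \<Rightarrow> (otree \<Rightarrow> otree \<Rightarrow> (nat \<Rightarrow> nat) \<Rightarrow> 'a \<Rightarrow> 'a)
    \<Rightarrow> ((otree \<times> 'a) \<times> (otree \<times> 'a)) set" where
  "homeo obj mor = {((T, t), (T', t')). (T, t) \<in> psi_trees obj \<and> (T', t') \<in> psi_trees obj
      \<and> (\<exists>j. is_iso T T' j \<and> mor T T' j t' = t)}"

definition classes :: "(otree \<Rightarrow> 'a set) \<Rightarrow> (otree \<Rightarrow> otree \<Rightarrow> (nat \<Rightarrow> nat) \<Rightarrow> 'a \<Rightarrow> 'a)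
    \<Rightarrow> (otree \<times> 'a) set set" where
  "classes obj mor = psi_trees obj // homeo obj mor"

definition cls :: "(otree \<Rightarrow> 'a set) \<Rightarrow> (otree \<Rightarrow> otree \<Rightarrow> (nat \<Rightarrow> nat) \<Rightarrow> 'a \<Rightarrow> 'a)
    \<Rightarrow> otree \<times> 'a \<Rightarrow> (otree \<times> 'a) set" where
  "cls obj mor p = homeo obj mor `` {p}"

text \<open>T_0(psi): finitely supported R-valued functions on homeomorphism classes
  (free R-module). T_0 (x) T_0 and T_0^(x)3 are represented as the free modules on
  pairs / triples of classes (canonical isomorphism for free modules).\<close>
definition T0 :: "(otree \<Rightarrow> 'a set) \<Rightarrow> (otree \<Rightarrow> otree \<Rightarrow> (nat \<Rightarrow> nat) \<Rightarrow> 'a \<Rightarrow> 'a)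
    \<Rightarrow> ((otree \<times> 'a) set \<Rightarrow> 'r::comm_ring_1) set" where
  "T0 obj mor = {x. finite {c. x c \<noteq> 0} \<and> {c. x c \<noteq> 0} \<subseteq> classes obj mor}"

definition comp_tree :: "otree \<Rightarrow> nat \<times> nat \<Rightarrow> nat \<Rightarrow> otree" where
  "comp_tree T e w = (let E' = edgs T - {e};
       V' = {x \<in> verts T. (w, x) \<in> (E' \<union> E'\<inverse>)\<^sup>*} in (V', E' \<inter> V' \<times> V'))"

text \<open>e = (u,v) is directed from u (in T^2_e) to v (in T^1_e).\<close>
definition T1e :: "otree \<Rightarrow> nat \<times> nat \<Rightarrow> otree" where "T1e T e = comp_tree T e (snd e)"
definition T2e :: "otree \<Rightarrow> nat \<times> nat \<Rightarrow> otree" where "T2e T e = comp_tree T e (fst e)"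

definition nu_gen :: "(otree \<Rightarrow> 'a set) \<Rightarrow> (otree \<Rightarrow> otree \<Rightarrow> (nat \<Rightarrow> nat) \<Rightarrow> 'a \<Rightarrow> 'a)
    \<Rightarrow> otree \<times> 'a \<Rightarrow> (otree \<times> 'a) set \<times> (otree \<times> 'a) set \<Rightarrow> 'r::comm_ring_1" where
  "nu_gen obj mor p = (\<lambda>(c1, c2). (case p of (T, t) \<Rightarrow>
     \<Sum>e\<in>edgs T.
       (let a1 = cls obj mor (T1e T e, restr mor T (T1e T e) t);
            a2 = cls obj mor (T2e T e, restr mor T (T2e T e) t) in
        (if (c1, c2) = (a1, a2) then 1 else 0) - (if (c1, c2) = (a2, a1) then 1 else 0))))"

definition nu_cls :: "(otree \<Rightarrow> 'a set) \<Rightarrow> (otree \<Rightarrow> otree \<Rightarrow> (nat \<Rightarrow> nat) \<Rightarrow> 'a \<Rightarrow> 'a)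
    \<Rightarrow> (otree \<times> 'a) set \<Rightarrow> (otree \<times> 'a) set \<times> (otree \<times> 'a) set \<Rightarrow> 'r::comm_ring_1" where
  "nu_cls obj mor c = nu_gen obj mor (SOME p. p \<in> c)"

definition nu0 :: "(otree \<Rightarrow> 'a set) \<Rightarrow> (otree \<Rightarrow> otree \<Rightarrow> (nat \<Rightarrow> nat) \<Rightarrow> 'a \<Rightarrow> 'a)
    \<Rightarrow> ((otree \<times> 'a) set \<Rightarrow> 'r::comm_ring_1)
    \<Rightarrow> (otree \<times> 'a) set \<times> (otree \<times> 'a) set \<Rightarrow> 'r" where
  "nu0 obj mor x = (\<lambda>k. \<Sum>c\<in>{c. x c \<noteq> 0}. x c * nu_cls obj mor c k)"

definition perm2 :: "('c \<times> 'c \<Rightarrow> 'r) \<Rightarrow> 'c \<times> 'c \<Rightarrow> 'r" where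
  "perm2 y = (\<lambda>(a, b). y (b, a))"

definition id_tensor_nu0 :: "(otree \<Rightarrow> 'a set) \<Rightarrow> (otree \<Rightarrow> otree \<Rightarrow> (nat \<Rightarrow> nat) \<Rightarrow> 'a \<Rightarrow> 'a)
    \<Rightarrow> ((otree \<times> 'a) set \<times> (otree \<times> 'a) set \<Rightarrow> 'r::comm_ring_1)
    \<Rightarrow> (otree \<times> 'a) set \<times> (otree \<times> 'a) set \<times> (otree \<times> 'a) set \<Rightarrow> 'r" where
  "id_tensor_nu0 obj mor y = (\<lambda>(a, b, c). \<Sum>d\<in>{d. y (a, d) \<noteq> 0}. y (a, d) * nu_cls obj mor d (b, c))"

text \<open>tau(x (x) y (x) z) = z (x) x (x) y, i.e. (tau w)(q,r,p) = w(p,q,r).\<close>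
definition tau3 :: "('c \<times> 'c \<times> 'c \<Rightarrow> 'r) \<Rightarrow> 'c \<times> 'c \<times> 'c \<Rightarrow> 'r" where
  "tau3 w = (\<lambda>(p, q, r). w (q, r, p))"

end

theory Submission
  imports Defs "HOL-Library.Disjoint_Sets"
begin

text \<open>Cutting an edge \<open>e\<close> of a tree leaves two trees, and cutting two distinct edges \<open>e\<close>, \<open>f\<close>
  leaves three: the part \<open>P\<close> beyond \<open>e\<close>, the part \<open>Q\<close> beyond \<open>f\<close> and the middle part \<open>M\<close>.
  Hence \<open>(id \<otimes> \<nu>\<^sub>0) \<nu>\<^sub>0 (T, t)\<close> is a sum over ordered pairs of distinct edges, where
  \<open>(e, f)\<close> contributes \<open>\<plusminus>P \<otimes> (Q \<otimes> M - M \<otimes> Q)\<close> and \<open>(f, e)\<close> contributes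
  \<open>\<plusminus>Q \<otimes> (P \<otimes> M - M \<otimes> P)\<close> with the same sign; the cyclic symmetrisation of these two terms
  vanishes. Well-definedness on homeomorphism classes holds because an isomorphism of trees carries
  the two components of \<open>T - e\<close> onto those of the image, and antisymmetry is built into the formula.\<close>

section \<open>Undirected reachability and cut components\<close>

abbreviation ureach :: "('b \<times> 'b) set \<Rightarrow> ('b \<times> 'b) set" where
  "ureach E \<equiv> (E \<union> E\<inverse>)\<^sup>*"

lemma ureach_sym: "(a, b) \<in> ureach E \<Longrightarrow> (b, a) \<in> ureach E"
  using rtrancl_converseI[of a b "E \<union> E\<inverse>"] by (simp add: converse_Un Un_commute)

lemma ureach_mono: "E \<subseteq> F \<Longrightarrow> ureach E \<subseteq> ureach F"
  by (rule rtrancl_mono) auto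

text \<open>Send every vertex \<open>v \<noteq> r\<close> to an edge joining it to a vertex strictly closer to \<open>r\<close>;
  this map is injective.\<close>
lemma card_le_Suc_card_edges_if_connected:
  assumes fin: "finite V" and EV: "E \<subseteq> V \<times> V" and r: "r \<in> V"
    and conn: "\<forall>v\<in>V. (r, v) \<in> ureach E"
  shows "card V \<le> card E + 1"
proof -
  define S where "S = E \<union> E\<inverse>"
  define dist where "dist v = (LEAST n. (r, v) \<in> S ^^ n)" for v
  have closer: "\<exists>u. (u, v) \<in> S \<and> dist u < dist v" if "v \<in> V" "v \<noteq> r" for v
  proof -
    from conn that obtain n where "(r, v) \<in> S ^^ n"
      unfolding S_def using rtrancl_power by blast
    then have d: "(r, v) \<in> S ^^ dist v" unfolding dist_def by (rule LeastI)
    with that obtain m where m: "dist v = Suc m" by (cases "dist v") auto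
    with d obtain u where u: "(r, u) \<in> S ^^ m" and uv: "(u, v) \<in> S" by auto
    have "dist u \<le> m" unfolding dist_def using u by (rule Least_le)
    with uv m show ?thesis by auto
  qed
  define g where "g v = (SOME e. \<exists>u. e \<in> E \<and> (e = (u, v) \<or> e = (v, u)) \<and> dist u < dist v)" for v
  have g: "\<exists>u. g v \<in> E \<and> (g v = (u, v) \<or> g v = (v, u)) \<and> dist u < dist v"
    if "v \<in> V" "v \<noteq> r" for v
  proof -
    from closer[OF that] have "\<exists>e u. e \<in> E \<and> (e = (u, v) \<or> e = (v, u)) \<and> dist u < dist v"
      unfolding S_def by blast
    then show ?thesis unfolding g_def by (rule someI_ex)
  qed
  have "inj_on g (V - {r})"
  proof (rule inj_onI)
    fix v w assume v: "v \<in> V - {r}" and w: "w \<in> V - {r}" and eq: "g v = g w"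
    from g[of v] v obtain u where u: "g v = (u, v) \<or> g v = (v, u)" "dist u < dist v" by auto
    from g[of w] w obtain u' where u': "g w = (u', w) \<or> g w = (w, u')" "dist u' < dist w" by auto
    from u u' eq show "v = w" by auto
  qed
  moreover have "g ` (V - {r}) \<subseteq> E" using g by blast
  moreover have "finite E" using fin EV finite_subset by blast
  ultimately have "card (V - {r}) \<le> card E" by (rule card_inj_on_le)
  then show ?thesis using r fin by simp
qed

definition is_graph :: "otree \<Rightarrow> bool" where
  "is_graph T \<longleftrightarrow> edgs T \<subseteq> verts T \<times> verts T"

lemma is_otree_is_graph: "is_otree T \<Longrightarrow> is_graph T"
  by (simp add: is_otree_def is_graph_def)

lemma edge_in_verts: "is_graph T \<Longrightarrow> f \<in> edgs T \<Longrightarrow> fst f \<in> verts T \<and> snd f \<in> verts T"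
  by (auto simp: is_graph_def)

lemma ureach_step_in_verts:
  "is_graph T \<Longrightarrow> (a, b) \<in> (edgs T - F) \<union> (edgs T - F)\<inverse> \<Longrightarrow> a \<in> verts T \<and> b \<in> verts T"
  by (auto simp: is_graph_def)

lemma otree_eqI: "verts A = verts B \<Longrightarrow> edgs A = edgs B \<Longrightarrow> A = B"
  by (metis prod.collapse verts_def edgs_def)

definition cut_comp :: "otree \<Rightarrow> (nat \<times> nat) set \<Rightarrow> nat \<Rightarrow> otree" where
  "cut_comp T F w = (let V = {x \<in> verts T. (w, x) \<in> ureach (edgs T - F)} in (V, (edgs T - F) \<inter> V \<times> V))"

lemma verts_cut_comp: "verts (cut_comp T F w) = {x \<in> verts T. (w, x) \<in> ureach (edgs T - F)}"
  by (simp add: cut_comp_def verts_def Let_def)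

lemma edgs_cut_comp: "edgs (cut_comp T F w) = (edgs T - F) \<inter> verts (cut_comp T F w) \<times> verts (cut_comp T F w)"
  by (simp add: cut_comp_def verts_def edgs_def Let_def)

lemma comp_tree_eq_cut_comp: "comp_tree T e w = cut_comp T {e} w"
  by (simp add: comp_tree_def cut_comp_def Let_def)

lemma cut_comp_subset: "verts (cut_comp T F w) \<subseteq> verts T" "edgs (cut_comp T F w) \<subseteq> edgs T"
  by (auto simp: verts_cut_comp edgs_cut_comp)

lemma is_graph_cut_comp: "is_graph (cut_comp T F w)"
  by (auto simp: is_graph_def edgs_cut_comp)

lemma cut_comp_self: "w \<in> verts T \<Longrightarrow> w \<in> verts (cut_comp T F w)"
  by (simp add: verts_cut_comp)

lemma ureach_cut_comp:
  assumes g: "is_graph T" and x: "x \<in> verts (cut_comp T F w)"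
  shows "(w, x) \<in> ureach (edgs (cut_comp T F w))"
proof -
  have "(w, x) \<in> ureach (edgs T - F)" using x by (simp add: verts_cut_comp)
  then show ?thesis
  proof (induction rule: rtrancl_induct)
    case base then show ?case by simp
  next
    case (step y z)
    have "(w, z) \<in> ureach (edgs T - F)" using step(1,2) by (rule rtrancl_into_rtrancl)
    then have "y \<in> verts (cut_comp T F w)" "z \<in> verts (cut_comp T F w)"
      using ureach_step_in_verts[OF g step(2)] step(1) by (auto simp: verts_cut_comp)
    then have "(y, z) \<in> edgs (cut_comp T F w) \<union> (edgs (cut_comp T F w))\<inverse>"
      using step(2) by (auto simp: edgs_cut_comp)
    then show ?case using step(3) by (rule rtrancl_into_rtrancl[rotated])
  qed
qed

lemma cut_comp_eq_if_ureach:
  assumes "(z, z') \<in> ureach (edgs T - F)"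
  shows "cut_comp T F z = cut_comp T F z'"
proof -
  have V: "verts (cut_comp T F z) = verts (cut_comp T F z')"
    using assms ureach_sym[OF assms] by (auto simp: verts_cut_comp intro: rtrancl_trans)
  show ?thesis by (rule otree_eqI[OF V]) (simp add: edgs_cut_comp V)
qed

lemma verts_cut_comp_antimono: "F \<subseteq> G \<Longrightarrow> verts (cut_comp T G z) \<subseteq> verts (cut_comp T F z)"
  unfolding verts_cut_comp using ureach_mono[of "edgs T - G" "edgs T - F"] by auto

lemma cut_comp_cut_comp:
  assumes g: "is_graph T" and z: "z \<in> verts (cut_comp T F w)"
  shows "cut_comp (cut_comp T F w) G z = cut_comp T (F \<union> G) z"
proof -
  let ?A = "cut_comp T F w"
  have "edgs ?A - G \<subseteq> edgs T - (F \<union> G)" by (auto simp: edgs_cut_comp)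
  then have sub: "verts (cut_comp ?A G z) \<subseteq> verts (cut_comp T (F \<union> G) z)"
    using ureach_mono cut_comp_subset(1)[of T F w] by (auto simp: verts_cut_comp)
  have "y \<in> verts ?A \<and> (z, y) \<in> ureach (edgs ?A - G)" if "(z, y) \<in> ureach (edgs T - (F \<union> G))" for y
    using that
  proof (induction rule: rtrancl_induct)
    case base then show ?case using z by simp
  next
    case (step a b)
    have "(a, b) \<in> (edgs T - F) \<union> (edgs T - F)\<inverse>" using step(2) by auto
    moreover have "(w, a) \<in> ureach (edgs T - F)" using step(3) by (simp add: verts_cut_comp)
    ultimately have "(w, b) \<in> ureach (edgs T - F)" by (rule rtrancl_into_rtrancl[rotated])
    then have bA: "b \<in> verts ?A"
      using ureach_step_in_verts[OF g step(2)] by (simp add: verts_cut_comp)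
    have "(a, b) \<in> (edgs ?A - G) \<union> (edgs ?A - G)\<inverse>"
      using step(2,3) bA by (auto simp: edgs_cut_comp)
    then show ?case using bA step(3) by (meson rtrancl_into_rtrancl)
  qed
  then have V: "verts (cut_comp ?A G z) = verts (cut_comp T (F \<union> G) z)"
    using sub by (auto simp: verts_cut_comp)
  have "edgs (cut_comp ?A G z) = edgs (cut_comp T (F \<union> G) z)"
    using V cut_comp_subset(1)[of ?A G z] unfolding edgs_cut_comp[of ?A] edgs_cut_comp[of T]
    by (auto simp: edgs_cut_comp)
  with V show ?thesis by (rule otree_eqI)
qed

lemma cut_comp_insert_far:
  assumes g: "is_graph T" and f: "fst f \<notin> verts (cut_comp T F z)"
  shows "cut_comp T (insert f F) z = cut_comp T F z"
proof -
  have "(z, y) \<in> ureach (edgs T - insert f F)" if "(z, y) \<in> ureach (edgs T - F)" for y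
    using that
  proof (induction rule: rtrancl_induct)
    case base then show ?case by simp
  next
    case (step a b)
    have "(z, b) \<in> ureach (edgs T - F)" using step(1,2) by (rule rtrancl_into_rtrancl)
    then have "fst f \<noteq> a" "fst f \<noteq> b"
      using f ureach_step_in_verts[OF g step(2)] step(1) by (auto simp: verts_cut_comp)
    then have "(a, b) \<in> (edgs T - insert f F) \<union> (edgs T - insert f F)\<inverse>" using step(2) by auto
    then show ?case using step(3) by (rule rtrancl_into_rtrancl[rotated])
  qed
  then have V: "verts (cut_comp T (insert f F) z) = verts (cut_comp T F z)"
    using verts_cut_comp_antimono[of F "insert f F" T z] by (auto simp: verts_cut_comp)
  have "edgs (cut_comp T (insert f F) z) = edgs (cut_comp T F z)"
    unfolding edgs_cut_comp V using f by (cases f) auto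
  with V show ?thesis by (rule otree_eqI)
qed

section \<open>Cutting edges of a tree\<close>

lemma is_otreeI:
  assumes "finite (verts T)" "w \<in> verts T" "is_graph T" "\<forall>x\<in>verts T. (w, x) \<in> ureach (edgs T)"
    "card (edgs T) + 1 = card (verts T)"
  shows "is_otree T"
proof -
  have "(u, v) \<in> ureach (edgs T)" if "u \<in> verts T" "v \<in> verts T" for u v
    using ureach_sym assms(4) that by (meson rtrancl_trans)
  then show ?thesis using assms unfolding is_otree_def is_graph_def by blast
qed

lemma otree_ureach: "is_otree T \<Longrightarrow> u \<in> verts T \<Longrightarrow> v \<in> verts T \<Longrightarrow> (u, v) \<in> ureach (edgs T)"
  by (simp add: is_otree_def)

lemma finite_edgs_otree: "is_otree T \<Longrightarrow> finite (edgs T)"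
  unfolding is_otree_def by (meson finite_SigmaI finite_subset)

text \<open>Otherwise \<open>T\<close> would stay connected with one edge fewer, too few for its vertices.\<close>
lemma otree_cut_edge_disconnects:
  assumes T: "is_otree T" and e: "e \<in> edgs T"
  shows "(fst e, snd e) \<notin> ureach (edgs T - {e})"
proof
  let ?E = "edgs T - {e}"
  assume uv: "(fst e, snd e) \<in> ureach ?E"
  have "edgs T \<union> (edgs T)\<inverse> \<subseteq> ureach ?E"
  proof
    fix p assume "p \<in> edgs T \<union> (edgs T)\<inverse>"
    then consider "p \<in> ?E \<union> ?E\<inverse>" | "p = (fst e, snd e)" | "p = (snd e, fst e)"
      by (cases e) auto
    then show "p \<in> ureach ?E"
    proof cases
      case 1 then show ?thesis by blast
    next
      case 2 then show ?thesis using uv by simp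
    next
      case 3 then show ?thesis using ureach_sym[OF uv] by simp
    qed
  qed
  then have "ureach (edgs T) \<subseteq> ureach ?E" by (rule rtrancl_subset_rtrancl)
  moreover have u: "fst e \<in> verts T" using edge_in_verts[OF is_otree_is_graph[OF T] e] by simp
  ultimately have conn: "\<forall>x\<in>verts T. (fst e, x) \<in> ureach ?E" using otree_ureach[OF T] by blast
  have fin: "finite (verts T)" and sub: "?E \<subseteq> verts T \<times> verts T"
    using T by (auto simp: is_otree_def)
  have "card (verts T) \<le> card ?E + 1"
    by (rule card_le_Suc_card_edges_if_connected[OF fin sub u conn])
  moreover have "card ?E + 2 = card (verts T)"
    using T e finite_edgs_otree[OF T] card_gt_0_iff[of "edgs T"]
    by (auto simp: is_otree_def card_Diff_singleton)
  ultimately show False by simp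
qed

lemma otree_edge_not_loop: "is_otree T \<Longrightarrow> e \<in> edgs T \<Longrightarrow> fst e \<noteq> snd e"
  using otree_cut_edge_disconnects by fastforce

lemma cut_comps_disjoint:
  assumes "is_otree T" and "e \<in> edgs T"
  shows "verts (cut_comp T {e} (fst e)) \<inter> verts (cut_comp T {e} (snd e)) = {}"
proof -
  have "(fst e, snd e) \<in> ureach (edgs T - {e})"
    if "(fst e, x) \<in> ureach (edgs T - {e})" "(snd e, x) \<in> ureach (edgs T - {e})" for x
    using that ureach_sym rtrancl_trans by metis
  then show ?thesis using otree_cut_edge_disconnects[OF assms] unfolding verts_cut_comp by blast
qed

lemma cut_comps_cover:
  assumes T: "is_otree T" and e: "e \<in> edgs T"
  shows "verts (cut_comp T {e} (fst e)) \<union> verts (cut_comp T {e} (snd e)) = verts T"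
proof -
  let ?E = "edgs T - {e}"
  have "(fst e, x) \<in> ureach ?E \<or> (snd e, x) \<in> ureach ?E" if "(fst e, x) \<in> ureach (edgs T)" for x
    using that
  proof (induction rule: rtrancl_induct)
    case base then show ?case by simp
  next
    case (step y z)
    show ?case
    proof (cases "(y, z) \<in> ?E \<union> ?E\<inverse>")
      case True then show ?thesis using step(3) by (meson rtrancl_into_rtrancl)
    next
      case False
      then have "(y, z) = e \<or> (y, z) = prod.swap e" using step(2) by (cases e) auto
      then show ?thesis by (cases e) auto
    qed
  qed
  moreover have "fst e \<in> verts T" using edge_in_verts[OF is_otree_is_graph[OF T] e] by simp
  ultimately show ?thesis using otree_ureach[OF T] by (auto simp: verts_cut_comp)
qed

lemma cut_comps_edges_cover:
  assumes T: "is_otree T" and e: "e \<in> edgs T"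
  shows "edgs (cut_comp T {e} (fst e)) \<union> edgs (cut_comp T {e} (snd e)) = edgs T - {e}"
proof
  show "edgs T - {e} \<subseteq> edgs (cut_comp T {e} (fst e)) \<union> edgs (cut_comp T {e} (snd e))"
  proof
    fix f assume f: "f \<in> edgs T - {e}"
    obtain a b where ab: "f = (a, b)" by fastforce
    have "a \<in> verts T" "b \<in> verts T"
      using edge_in_verts[OF is_otree_is_graph[OF T], of f] f ab by auto
    then obtain x where x: "x \<in> {fst e, snd e}" and a: "(x, a) \<in> ureach (edgs T - {e})"
      using cut_comps_cover[OF T e] by (auto simp: verts_cut_comp)
    have "(a, b) \<in> (edgs T - {e}) \<union> (edgs T - {e})\<inverse>" using f ab by simp
    with a have "(x, b) \<in> ureach (edgs T - {e})" by (rule rtrancl_into_rtrancl)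
    with a x f ab \<open>a \<in> verts T\<close> \<open>b \<in> verts T\<close>
    show "f \<in> edgs (cut_comp T {e} (fst e)) \<union> edgs (cut_comp T {e} (snd e))"
      by (auto simp: edgs_cut_comp verts_cut_comp)
  qed
qed (auto simp: edgs_cut_comp)

lemma cut_comps_edges_disjoint:
  assumes "is_otree T" and "e \<in> edgs T"
  shows "edgs (cut_comp T {e} (fst e)) \<inter> edgs (cut_comp T {e} (snd e)) = {}"
  using cut_comps_disjoint[OF assms] by (auto simp: edgs_cut_comp)

text \<open>Both components are connected, so each has at most one vertex more than edges; since
  together they have exactly two vertices more than edges, both are trees.\<close>
lemma is_otree_cut_comp:
  assumes T: "is_otree T" and e: "e \<in> edgs T" and x: "x \<in> {fst e, snd e}"
  shows "is_otree (cut_comp T {e} x)"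
proof -
  let ?V = "\<lambda>y. verts (cut_comp T {e} y)" and ?E = "\<lambda>y. edgs (cut_comp T {e} y)"
  have g: "is_graph T" using T by (rule is_otree_is_graph)
  have finV: "finite (verts T)" using T by (simp add: is_otree_def)
  have finE: "finite (edgs T)" using T by (rule finite_edgs_otree)
  have self: "y \<in> ?V y" if "y \<in> {fst e, snd e}" for y
    using that edge_in_verts[OF g e] by (auto intro: cut_comp_self)
  have fin: "finite (?V y)" for y
    using cut_comp_subset(1) finV by (rule finite_subset)
  have finE': "finite (?E y)" for y
    using cut_comp_subset(2) finE by (rule finite_subset)
  have le: "card (?V y) \<le> card (?E y) + 1" if "y \<in> {fst e, snd e}" for y
  proof (rule card_le_Suc_card_edges_if_connected[OF fin _ self[OF that]])
    show "?E y \<subseteq> ?V y \<times> ?V y" using is_graph_cut_comp by (simp add: is_graph_def)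
    show "\<forall>v\<in>?V y. (y, v) \<in> ureach (?E y)" using ureach_cut_comp[OF g] by blast
  qed
  have "card (?V (fst e)) + card (?V (snd e)) = card (verts T)"
    using card_Un_disjoint[OF fin fin cut_comps_disjoint[OF T e]] cut_comps_cover[OF T e] by simp
  moreover have "card (?E (fst e)) + card (?E (snd e)) = card (edgs T - {e})"
    using card_Un_disjoint[OF finE' finE' cut_comps_edges_disjoint[OF T e]]
      cut_comps_edges_cover[OF T e] by simp
  moreover have "card (edgs T - {e}) + 2 = card (verts T)"
    using T e finE card_gt_0_iff[of "edgs T"] by (auto simp: is_otree_def card_Diff_singleton)
  ultimately have "card (?E y) + 1 = card (?V y)" if "y \<in> {fst e, snd e}" for y
    using le[of "fst e"] le[of "snd e"] that by auto
  then show ?thesis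
    using is_otreeI[OF fin self[OF x] is_graph_cut_comp] ureach_cut_comp[OF g] x by blast
qed

lemma cut_comp_other_side:
  assumes T: "is_otree T" and e: "e \<in> edgs T" and f: "f \<in> edgs (cut_comp T {e} x)"
    and x: "x \<in> {fst e, snd e}" and x': "x' \<in> {fst e, snd e}" "x' \<noteq> x"
  shows "cut_comp T {e, f} x' = cut_comp T {e} x'"
proof -
  have "fst f \<in> verts (cut_comp T {e} x)" using edge_in_verts[OF is_graph_cut_comp f] by simp
  moreover have "verts (cut_comp T {e} x) \<inter> verts (cut_comp T {e} x') = {}"
    using cut_comps_disjoint[OF T e] x x' by auto
  ultimately have "fst f \<notin> verts (cut_comp T {e} x')" by auto
  from cut_comp_insert_far[OF is_otree_is_graph[OF T] this] show ?thesis
    by (simp add: insert_commute)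
qed

text \<open>For distinct edges \<open>e\<close>, \<open>f\<close> of a tree: the endpoint of \<open>e\<close> facing \<open>f\<close>, and the one
  facing away from it.\<close>
definition near_end :: "otree \<Rightarrow> nat \<times> nat \<Rightarrow> nat \<times> nat \<Rightarrow> nat" where
  "near_end T e f = (if f \<in> edgs (cut_comp T {e} (fst e)) then fst e else snd e)"

definition far_end :: "otree \<Rightarrow> nat \<times> nat \<Rightarrow> nat \<times> nat \<Rightarrow> nat" where
  "far_end T e f = (if f \<in> edgs (cut_comp T {e} (fst e)) then snd e else fst e)"

lemma near_end_eqI:
  assumes T: "is_otree T" and e: "e \<in> edgs T" and x: "x \<in> {fst e, snd e}"
    and f: "f \<in> edgs (cut_comp T {e} x)"
  shows "near_end T e f = x"
  using x f cut_comps_edges_disjoint[OF T e] by (auto simp: near_end_def)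

lemma near_end_side:
  assumes "is_otree T" "e \<in> edgs T" "f \<in> edgs T" "e \<noteq> f"
  shows "f \<in> edgs (cut_comp T {e} (near_end T e f))"
  using cut_comps_edges_cover[OF assms(1,2)] assms(3,4) by (auto simp: near_end_def)

lemma cut_comp_far_end:
  assumes T: "is_otree T" and e: "e \<in> edgs T" and "f \<in> edgs T" "e \<noteq> f"
  shows "cut_comp T {e, f} (far_end T e f) = cut_comp T {e} (far_end T e f)"
proof (rule cut_comp_other_side[OF T e near_end_side[OF assms]])
  show "near_end T e f \<in> {fst e, snd e}" "far_end T e f \<in> {fst e, snd e}"
    by (simp_all add: near_end_def far_end_def)
  show "far_end T e f \<noteq> near_end T e f"
    using otree_edge_not_loop[OF T e] by (auto simp: near_end_def far_end_def)
qed

lemma cut_comp_near_end: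
  assumes T: "is_otree T" and e: "e \<in> edgs T" and f: "f \<in> edgs T" and ef: "e \<noteq> f"
  shows "cut_comp T {e, f} (near_end T e f) = cut_comp T {e, f} (near_end T f e)"
proof -
  define x where "x = near_end T e f"
  let ?A = "cut_comp T {e} x"
  have g: "is_graph T" using T by (rule is_otree_is_graph)
  have x_e: "x \<in> {fst e, snd e}" by (simp add: x_def near_end_def)
  have A: "is_otree ?A" using is_otree_cut_comp[OF T e x_e] .
  have fA: "f \<in> edgs ?A" unfolding x_def by (rule near_end_side[OF T e f ef])
  have "x \<in> verts ?A" using x_e edge_in_verts[OF g e] by (auto intro: cut_comp_self)
  then obtain y where y: "y \<in> {fst f, snd f}" and xy: "x \<in> verts (cut_comp ?A {f} y)"
    using cut_comps_cover[OF A fA] by auto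
  have "y \<in> verts ?A" using y edge_in_verts[OF is_graph_cut_comp fA] by auto
  then have "cut_comp ?A {f} y = cut_comp T {e, f} y"
    using cut_comp_cut_comp[OF g, of y "{e}" x "{f}"] by (simp add: insert_commute)
  with xy have "(y, x) \<in> ureach (edgs T - {e, f})" by (simp add: verts_cut_comp)
  then have mid: "cut_comp T {e, f} x = cut_comp T {e, f} y" by (metis cut_comp_eq_if_ureach ureach_sym)
  have "x \<in> verts (cut_comp T {f} y)"
    using xy \<open>cut_comp ?A {f} y = cut_comp T {e, f} y\<close> verts_cut_comp_antimono[of "{f}" "{e, f}" T y]
    by auto
  then have yx: "(y, x) \<in> ureach (edgs T - {f})" by (simp add: verts_cut_comp)
  obtain u v where uv: "e = (u, v)" by fastforce
  have "(u, v) \<in> ureach (edgs T - {f})" "(v, u) \<in> ureach (edgs T - {f})"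
    using e ef uv by (blast intro: r_into_rtrancl)+
  then have "(y, u) \<in> ureach (edgs T - {f}) \<and> (y, v) \<in> ureach (edgs T - {f})"
    using x_e yx uv by (auto intro: rtrancl_trans)
  moreover have "u \<in> verts T" "v \<in> verts T" using edge_in_verts[OF g e] uv by auto
  ultimately have "e \<in> edgs (cut_comp T {f} y)"
    using e ef uv by (simp add: edgs_cut_comp verts_cut_comp)
  then have "near_end T f e = y" by (rule near_end_eqI[OF T f y])
  with mid show ?thesis by (simp add: x_def)
qed

section \<open>Isomorphisms and tree-structures\<close>

lemma tree_structure_mor_in:
  "tree_structure obj mor \<Longrightarrow> is_emb S T f \<Longrightarrow> x \<in> obj T \<Longrightarrow> mor S T f x \<in> obj S"
  unfolding tree_structure_def by blast

lemma tree_structure_mor_id: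
  "tree_structure obj mor \<Longrightarrow> is_otree T \<Longrightarrow> x \<in> obj T \<Longrightarrow> mor T T (restrict id (verts T)) x = x"
  unfolding tree_structure_def by blast

lemma tree_structure_mor_compose:
  "tree_structure obj mor \<Longrightarrow> is_emb S T f \<Longrightarrow> is_emb T U g \<Longrightarrow> x \<in> obj U \<Longrightarrow>
   mor S U (compose (verts S) g f) x = mor S T f (mor T U g x)"
  unfolding tree_structure_def by blast

lemma is_emb_inclusion:
  "is_otree S \<Longrightarrow> is_otree T \<Longrightarrow> verts S \<subseteq> verts T \<Longrightarrow> edgs S \<subseteq> edgs T \<Longrightarrow>
   is_emb S T (restrict id (verts S))"
  unfolding is_emb_def is_otree_def by auto

lemma case_prod_eq_map_prod: "(\<lambda>(u, v). (j u, j v)) = map_prod j j"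
  by auto

lemma is_iso_iff: "is_iso S T j \<longleftrightarrow> is_otree S \<and> is_otree T \<and> j \<in> extensional (verts S)
   \<and> bij_betw j (verts S) (verts T) \<and> map_prod j j ` edgs S = edgs T"
  unfolding is_iso_def is_emb_def bij_betw_def case_prod_eq_map_prod by auto

lemma is_iso_is_emb: "is_iso S T j \<Longrightarrow> is_emb S T j"
  by (simp add: is_iso_def)

lemma map_prod_image_cong:
  assumes "edgs S \<subseteq> verts S \<times> verts S" and "\<And>x. x \<in> verts S \<Longrightarrow> j x = k x"
  shows "map_prod j j ` edgs S = map_prod k k ` edgs S"
proof (rule image_cong[OF refl])
  fix p assume "p \<in> edgs S"
  with assms show "map_prod j j p = map_prod k k p" by (cases p) auto
qed

lemma map_prod_image_id:
  assumes "is_otree S" and "\<And>x. x \<in> verts S \<Longrightarrow> j x = x"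
  shows "map_prod j j ` edgs S = edgs S"
proof -
  have "map_prod j j ` edgs S = map_prod id id ` edgs S"
    using assms by (intro map_prod_image_cong) (auto simp: is_otree_def)
  then show ?thesis by (simp add: prod.map_id)
qed

lemma is_iso_id: "is_otree T \<Longrightarrow> is_iso T T (restrict id (verts T))"
  by (simp add: is_iso_iff map_prod_image_id bij_betw_def)

lemma is_iso_inv:
  assumes j: "is_iso S T j"
  shows "is_iso T S (restrict (inv_into (verts S) j) (verts T))"
proof -
  let ?j' = "restrict (inv_into (verts S) j) (verts T)"
  from j have S: "is_otree S" and T: "is_otree T" and bij: "bij_betw j (verts S) (verts T)"
    and E: "map_prod j j ` edgs S = edgs T"
    by (auto simp: is_iso_iff)
  have "?j' (j x) = x" if "x \<in> verts S" for x
    using that bij by (auto simp: bij_betw_def)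
  then have "map_prod ?j' ?j' ` edgs T = edgs S"
    unfolding E[symmetric] image_comp map_prod_compose[symmetric]
    by (intro map_prod_image_id[OF S]) simp
  then show ?thesis using S T bij_betw_inv_into[OF bij] by (simp add: is_iso_iff)
qed

lemma compose_is_iso_inv:
  assumes "is_iso S T j"
  shows "compose (verts T) j (restrict (inv_into (verts S) j) (verts T)) = restrict id (verts T)"
  using assms by (auto simp: is_iso_iff compose_def bij_betw_def f_inv_into_f fun_eq_iff)

lemma is_iso_compose:
  assumes f: "is_iso S T f" and g: "is_iso T U g"
  shows "is_iso S U (compose (verts S) g f)"
proof -
  from f g have S: "is_otree S" and U: "is_otree U"
    and bf: "bij_betw f (verts S) (verts T)" and bg: "bij_betw g (verts T) (verts U)"
    and Ef: "map_prod f f ` edgs S = edgs T" and Eg: "map_prod g g ` edgs T = edgs U"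
    by (auto simp: is_iso_iff)
  have h: "compose (verts S) g f x = (g \<circ> f) x" if "x \<in> verts S" for x
    using that by (simp add: compose_eq)
  have "bij_betw (compose (verts S) g f) (verts S) (verts U) = bij_betw (g \<circ> f) (verts S) (verts U)"
    by (rule bij_betw_cong) (rule h)
  then have "bij_betw (compose (verts S) g f) (verts S) (verts U)"
    using bij_betw_trans[OF bf bg] by simp
  moreover have "map_prod (compose (verts S) g f) (compose (verts S) g f) ` edgs S = edgs U"
  proof -
    have "map_prod (compose (verts S) g f) (compose (verts S) g f) ` edgs S
        = map_prod (g \<circ> f) (g \<circ> f) ` edgs S"
      by (rule map_prod_image_cong) (use S h in \<open>auto simp: is_otree_def\<close>)
    also have "\<dots> = map_prod g g ` map_prod f f ` edgs S" by (simp add: map_prod_compose image_comp)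
    also have "\<dots> = edgs U" using Ef Eg by simp
    finally show ?thesis .
  qed
  ultimately show ?thesis using S U by (simp add: is_iso_iff)
qed

lemma sym_homeo:
  assumes ts: "tree_structure obj mor"
  shows "sym (homeo obj mor)"
proof (rule symI)
  fix p q assume pq: "(p, q) \<in> homeo obj mor"
  obtain T t T' t' where pt: "p = (T, t)" "q = (T', t')" by fastforce
  from pq pt obtain j where j: "is_iso T T' j" and jt: "mor T T' j t' = t"
    and P: "(T, t) \<in> psi_trees obj" and Q: "(T', t') \<in> psi_trees obj"
    by (auto simp: homeo_def)
  let ?j' = "restrict (inv_into (verts T) j) (verts T')"
  have t': "t' \<in> obj T'" and T': "is_otree T'" using Q by (auto simp: psi_trees_def)
  have "mor T' T ?j' t = mor T' T' (compose (verts T') j ?j') t'"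
    using tree_structure_mor_compose[OF ts is_iso_is_emb[OF is_iso_inv[OF j]] is_iso_is_emb[OF j] t'] jt
    by simp
  also have "\<dots> = t'" using compose_is_iso_inv[OF j] tree_structure_mor_id[OF ts T' t'] by simp
  finally show "(q, p) \<in> homeo obj mor"
    using is_iso_inv[OF j] P Q pt unfolding homeo_def by blast
qed

lemma trans_homeo:
  assumes ts: "tree_structure obj mor"
  shows "trans (homeo obj mor)"
proof (rule transI)
  fix p q r assume pq: "(p, q) \<in> homeo obj mor" and qr: "(q, r) \<in> homeo obj mor"
  obtain T t T' t' T'' t'' where pt: "p = (T, t)" "q = (T', t')" "r = (T'', t'')" by fastforce
  from pq pt obtain j where j: "is_iso T T' j" and jt: "mor T T' j t' = t"
    and P: "(T, t) \<in> psi_trees obj" by (auto simp: homeo_def)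
  from qr pt obtain k where k: "is_iso T' T'' k" and kt: "mor T' T'' k t'' = t'"
    and R: "(T'', t'') \<in> psi_trees obj" by (auto simp: homeo_def)
  have "t'' \<in> obj T''" using R by (simp add: psi_trees_def)
  then have "mor T T'' (compose (verts T) k j) t'' = t"
    using tree_structure_mor_compose[OF ts is_iso_is_emb[OF j] is_iso_is_emb[OF k]] jt kt by simp
  then show "(p, r) \<in> homeo obj mor"
    using is_iso_compose[OF j k] P R pt unfolding homeo_def by blast
qed

lemma equiv_homeo:
  assumes ts: "tree_structure obj mor"
  shows "equiv (psi_trees obj) (homeo obj mor)"
proof (rule equivI)
  show "homeo obj mor \<subseteq> psi_trees obj \<times> psi_trees obj" by (auto simp: homeo_def)
  show "sym (homeo obj mor)" by (rule sym_homeo[OF ts])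
  show "trans (homeo obj mor)" by (rule trans_homeo[OF ts])
  show "refl_on (psi_trees obj) (homeo obj mor)"
  proof (rule refl_onI)
    fix p assume p: "p \<in> psi_trees obj"
    obtain T t where pt: "p = (T, t)" by fastforce
    have T: "is_otree T" and t: "t \<in> obj T" using p pt by (auto simp: psi_trees_def)
    show "(p, p) \<in> homeo obj mor"
      using p pt is_iso_id[OF T] tree_structure_mor_id[OF ts T t] unfolding homeo_def by blast
  qed
qed

lemma cls_eq_if_homeo:
  "tree_structure obj mor \<Longrightarrow> (p, q) \<in> homeo obj mor \<Longrightarrow> cls obj mor p = cls obj mor q"
  unfolding cls_def using equiv_homeo equiv_class_eq by metis

lemma cls_self: "tree_structure obj mor \<Longrightarrow> p \<in> psi_trees obj \<Longrightarrow> p \<in> cls obj mor p"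
  unfolding cls_def using equiv_homeo equiv_class_self by metis

lemma restr_in_obj:
  assumes ts: "tree_structure obj mor" and "is_otree S" "is_otree T"
    and sub: "verts S \<subseteq> verts T" "edgs S \<subseteq> edgs T" and t: "t \<in> obj T"
  shows "restr mor T S t \<in> obj S"
  unfolding restr_def using tree_structure_mor_in[OF ts is_emb_inclusion[OF assms(2,3) sub] t] .

lemma restr_restr:
  assumes ts: "tree_structure obj mor" and A: "is_otree A" and B: "is_otree B" and T: "is_otree T"
    and AB: "verts A \<subseteq> verts B" "edgs A \<subseteq> edgs B"
    and BT: "verts B \<subseteq> verts T" "edgs B \<subseteq> edgs T" and t: "t \<in> obj T"
  shows "restr mor B A (restr mor T B t) = restr mor T A t"
proof -
  have "compose (verts A) (restrict id (verts B)) (restrict id (verts A)) = restrict id (verts A)"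
    using AB unfolding compose_def by (auto simp: fun_eq_iff)
  then show ?thesis
    unfolding restr_def
    using tree_structure_mor_compose[OF ts is_emb_inclusion[OF A B AB] is_emb_inclusion[OF B T BT] t]
    by simp
qed

lemma inj_on_map_prod_verts:
  "is_iso T T' j \<Longrightarrow> inj_on (map_prod j j) (verts T \<times> verts T)"
  by (intro map_prod_inj_on) (auto simp: is_iso_iff bij_betw_def)

lemma is_iso_ureach_cut:
  assumes j: "is_iso T T' j" and e: "e \<in> edgs T"
    and ab: "(a, b) \<in> ureach (edgs T - {e})"
  shows "(j a, j b) \<in> ureach (edgs T' - {map_prod j j e})"
  using ab
proof (induction rule: rtrancl_induct)
  case base then show ?case by simp
next
  case (step y z)
  have edgs: "edgs T \<subseteq> verts T \<times> verts T" and E: "map_prod j j ` edgs T = edgs T'"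
    using j by (auto simp: is_iso_iff is_otree_def)
  have "map_prod j j p \<in> edgs T' - {map_prod j j e}" if p: "p \<in> edgs T - {e}" for p
  proof -
    have "map_prod j j p \<noteq> map_prod j j e"
      using p e edgs inj_onD[OF inj_on_map_prod_verts[OF j]] by blast
    then show ?thesis using p E by blast
  qed
  then have "(j y, j z) \<in> (edgs T' - {map_prod j j e}) \<union> (edgs T' - {map_prod j j e})\<inverse>"
    using step(2) by fastforce
  then show ?case using step(3) by (rule rtrancl_into_rtrancl[rotated])
qed

lemma verts_cut_comp_iso:
  assumes j: "is_iso T T' j" and e: "e \<in> edgs T" and w: "w \<in> verts T"
  shows "verts (cut_comp T' {map_prod j j e} (j w)) = j ` verts (cut_comp T {e} w)"
proof
  have bij: "bij_betw j (verts T) (verts T')" using j by (simp add: is_iso_iff)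
  show "j ` verts (cut_comp T {e} w) \<subseteq> verts (cut_comp T' {map_prod j j e} (j w))"
    using is_iso_ureach_cut[OF j e] bij by (auto simp: verts_cut_comp bij_betw_def)
  show "verts (cut_comp T' {map_prod j j e} (j w)) \<subseteq> j ` verts (cut_comp T {e} w)"
  proof
    fix y' assume "y' \<in> verts (cut_comp T' {map_prod j j e} (j w))"
    then have y': "y' \<in> verts T'" and r: "(j w, y') \<in> ureach (edgs T' - {map_prod j j e})"
      by (auto simp: verts_cut_comp)
    obtain y where y: "y \<in> verts T" "y' = j y" using y' bij by (auto simp: bij_betw_def)
    let ?j' = "restrict (inv_into (verts T) j) (verts T')"
    have inv: "?j' (j x) = x" if "x \<in> verts T" for x
      using that bij by (auto simp: bij_betw_def)
    have "map_prod j j e \<in> edgs T'" using j e by (auto simp: is_iso_iff)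
    from is_iso_ureach_cut[OF is_iso_inv[OF j] this r]
    have "(w, y) \<in> ureach (edgs T - {e})"
      using inv w y e j by (cases e) (auto simp: is_iso_iff is_otree_def)
    then show "y' \<in> j ` verts (cut_comp T {e} w)" using y by (auto simp: verts_cut_comp)
  qed
qed

lemma edgs_cut_comp_iso:
  assumes j: "is_iso T T' j" and e: "e \<in> edgs T" and w: "w \<in> verts T"
  shows "edgs (cut_comp T' {map_prod j j e} (j w)) = map_prod j j ` edgs (cut_comp T {e} w)"
proof -
  let ?V = "verts (cut_comp T {e} w)"
  have inj: "inj_on (map_prod j j) (verts T \<times> verts T)" by (rule inj_on_map_prod_verts[OF j])
  have edgs: "edgs T \<subseteq> verts T \<times> verts T" and E: "map_prod j j ` edgs T = edgs T'"
    using j by (auto simp: is_iso_iff is_otree_def)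
  have V: "?V \<subseteq> verts T" by (rule cut_comp_subset)
  have "map_prod j j ` edgs (cut_comp T {e} w) = map_prod j j ` ((edgs T - {e}) \<inter> ?V \<times> ?V)"
    by (simp add: edgs_cut_comp)
  also have "\<dots> = map_prod j j ` (edgs T - {e}) \<inter> map_prod j j ` (?V \<times> ?V)"
    using inj edgs V by (intro inj_on_image_Int) auto
  also have "\<dots> = (edgs T' - {map_prod j j e}) \<inter> (j ` ?V \<times> j ` ?V)"
  proof -
    have "map_prod j j ` (edgs T - {e}) = map_prod j j ` edgs T - map_prod j j ` {e}"
      by (rule inj_on_image_set_diff[OF inj]) (use edgs e in auto)
    moreover have "map_prod j j ` (?V \<times> ?V) = j ` ?V \<times> j ` ?V" by (rule map_prod_surj_on) auto
    ultimately show ?thesis using E by simp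
  qed
  also have "\<dots> = edgs (cut_comp T' {map_prod j j e} (j w))"
    by (simp add: edgs_cut_comp verts_cut_comp_iso[OF j e w])
  finally show ?thesis by simp
qed

lemma is_iso_cut_comp:
  assumes j: "is_iso T T' j" and e: "e \<in> edgs T" and w: "w \<in> {fst e, snd e}"
  shows "is_iso (cut_comp T {e} w) (cut_comp T' {map_prod j j e} (j w))
    (restrict j (verts (cut_comp T {e} w)))"
proof -
  let ?S = "cut_comp T {e} w"
  from j have T: "is_otree T" and T': "is_otree T'" and bij: "bij_betw j (verts T) (verts T')"
    and E: "map_prod j j ` edgs T = edgs T'"
    by (auto simp: is_iso_iff)
  have wT: "w \<in> verts T" using w edge_in_verts[OF is_otree_is_graph[OF T] e] by auto
  have "map_prod j j e \<in> edgs T'" using e E by blast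
  moreover have "j w \<in> {fst (map_prod j j e), snd (map_prod j j e)}" using w by auto
  ultimately have S': "is_otree (cut_comp T' {map_prod j j e} (j w))"
    by (rule is_otree_cut_comp[OF T'])
  have "bij_betw j (verts ?S) (j ` verts ?S)"
    by (rule inj_on_imp_bij_betw, rule inj_on_subset[OF _ cut_comp_subset(1)])
      (use bij in \<open>simp add: bij_betw_def\<close>)
  moreover have "map_prod (restrict j (verts ?S)) (restrict j (verts ?S)) ` edgs ?S = map_prod j j ` edgs ?S"
    using is_graph_cut_comp by (intro map_prod_image_cong) (auto simp: is_graph_def)
  ultimately show ?thesis
    using is_otree_cut_comp[OF T e w] S' verts_cut_comp_iso[OF j e wT] edgs_cut_comp_iso[OF j e wT]
    by (simp add: is_iso_iff)
qed

section \<open>The cobracket on generators\<close>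

definition wedge :: "'c \<Rightarrow> 'c \<Rightarrow> 'c \<times> 'c \<Rightarrow> 'r::comm_ring_1" where
  "wedge p q k = of_bool (k = (p, q)) - of_bool (k = (q, p))"

lemma wedge_swap: "wedge q p k = - wedge p q k"
  unfolding wedge_def by (rule minus_diff_eq[symmetric])

lemma wedge_flip: "wedge p q (b, a) = - wedge p q (a, b)"
  unfolding wedge_def by (cases "a = p"; cases "b = q"; cases "a = q"; cases "b = p") simp_all

definition cls_restr :: "(otree \<Rightarrow> 'a set) \<Rightarrow> (otree \<Rightarrow> otree \<Rightarrow> (nat \<Rightarrow> nat) \<Rightarrow> 'a \<Rightarrow> 'a)
    \<Rightarrow> otree \<Rightarrow> 'a \<Rightarrow> otree \<Rightarrow> (otree \<times> 'a) set" where
  "cls_restr obj mor T t S = cls obj mor (S, restr mor T S t)"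

lemma nu_gen_eq_sum_wedge:
  "nu_gen obj mor (T, t) k = (\<Sum>e\<in>edgs T.
     wedge (cls_restr obj mor T t (cut_comp T {e} (snd e))) (cls_restr obj mor T t (cut_comp T {e} (fst e))) k)"
  by (cases k)
    (simp add: nu_gen_def wedge_def of_bool_def cls_restr_def T1e_def T2e_def comp_tree_eq_cut_comp Let_def)

lemma cls_restr_cut_comp_iso:
  assumes ts: "tree_structure obj mor" and j: "is_iso T T' j" and jt: "mor T T' j t' = t"
    and t': "t' \<in> obj T'" and e: "e \<in> edgs T" and w: "w \<in> {fst e, snd e}"
  shows "cls_restr obj mor T t (cut_comp T {e} w)
    = cls_restr obj mor T' t' (cut_comp T' {map_prod j j e} (j w))"
proof -
  let ?S = "cut_comp T {e} w" and ?S' = "cut_comp T' {map_prod j j e} (j w)"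
  let ?j1 = "restrict j (verts ?S)"
  have iso: "is_iso ?S ?S' ?j1" by (rule is_iso_cut_comp[OF j e w])
  from j have T: "is_otree T" and T': "is_otree T'" by (auto simp: is_iso_iff)
  from iso have S: "is_otree ?S" and S': "is_otree ?S'" and imS: "?j1 ` verts ?S = verts ?S'"
    by (auto simp: is_iso_iff bij_betw_def)
  have emb: "is_emb ?S T (restrict id (verts ?S))" "is_emb ?S' T' (restrict id (verts ?S'))"
    by (rule is_emb_inclusion[OF S T cut_comp_subset], rule is_emb_inclusion[OF S' T' cut_comp_subset])
  text \<open>Both sides are the pull-back of \<open>t'\<close> along the same map \<open>?S \<rightarrow> T'\<close>.\<close>
  have "compose (verts ?S) j (restrict id (verts ?S))
      = compose (verts ?S) (restrict id (verts ?S')) ?j1"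
    using imS unfolding compose_def by (auto simp: fun_eq_iff)
  then have eq: "mor ?S ?S' ?j1 (restr mor T' ?S' t') = restr mor T ?S t"
    unfolding restr_def
    using tree_structure_mor_compose[OF ts emb(1) is_iso_is_emb[OF j] t']
      tree_structure_mor_compose[OF ts is_iso_is_emb[OF iso] emb(2) t'] jt
    by simp
  have "t \<in> obj T" using jt tree_structure_mor_in[OF ts is_iso_is_emb[OF j] t'] by simp
  then have "(?S, restr mor T ?S t) \<in> psi_trees obj"
    using restr_in_obj[OF ts S T cut_comp_subset] S by (simp add: psi_trees_def)
  moreover have "(?S', restr mor T' ?S' t') \<in> psi_trees obj"
    using restr_in_obj[OF ts S' T' cut_comp_subset t'] S' by (simp add: psi_trees_def)
  ultimately have "((?S, restr mor T ?S t), (?S', restr mor T' ?S' t')) \<in> homeo obj mor"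
    using iso eq unfolding homeo_def by blast
  then show ?thesis unfolding cls_restr_def by (rule cls_eq_if_homeo[OF ts])
qed

lemma nu_gen_homeo:
  assumes ts: "tree_structure obj mor" and pq: "(p, q) \<in> homeo obj mor"
  shows "nu_gen obj mor p = nu_gen obj mor q"
proof
  fix k
  obtain T t T' t' where pt: "p = (T, t)" "q = (T', t')" by fastforce
  from pq pt obtain j where j: "is_iso T T' j" and jt: "mor T T' j t' = t"
    and t': "t' \<in> obj T'" by (auto simp: homeo_def psi_trees_def)
  let ?C = "cls_restr obj mor T t" and ?C' = "cls_restr obj mor T' t'"
  from j have E: "map_prod j j ` edgs T = edgs T'" and edgs: "edgs T \<subseteq> verts T \<times> verts T"
    by (auto simp: is_iso_iff is_otree_def)
  have inj: "inj_on (map_prod j j) (edgs T)"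
    using inj_on_map_prod_verts[OF j] edgs by (rule inj_on_subset)
  have "nu_gen obj mor q k = (\<Sum>e'\<in>map_prod j j ` edgs T.
      wedge (?C' (cut_comp T' {e'} (snd e'))) (?C' (cut_comp T' {e'} (fst e'))) k)"
    using pt E by (simp add: nu_gen_eq_sum_wedge)
  also have "\<dots> = (\<Sum>e\<in>edgs T. wedge (?C' (cut_comp T' {map_prod j j e} (j (snd e))))
      (?C' (cut_comp T' {map_prod j j e} (j (fst e)))) k)"
    by (simp add: sum.reindex[OF inj])
  also have "\<dots> = (\<Sum>e\<in>edgs T. wedge (?C (cut_comp T {e} (snd e))) (?C (cut_comp T {e} (fst e))) k)"
    using cls_restr_cut_comp_iso[OF ts j jt t'] by simp
  also have "\<dots> = nu_gen obj mor p k" using pt by (simp add: nu_gen_eq_sum_wedge)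
  finally show "nu_gen obj mor p k = nu_gen obj mor q k" by (rule sym)
qed

lemma nu_cls_cls:
  assumes ts: "tree_structure obj mor" and p: "p \<in> psi_trees obj"
  shows "nu_cls obj mor (cls obj mor p) = nu_gen obj mor p"
proof -
  have "(SOME q. q \<in> cls obj mor p) \<in> cls obj mor p" using cls_self[OF ts p] by (rule someI)
  then have "(p, SOME q. q \<in> cls obj mor p) \<in> homeo obj mor" by (simp add: cls_def)
  then show ?thesis unfolding nu_cls_def by (rule nu_gen_homeo[OF ts, symmetric])
qed

lemma nu_gen_flip: "nu_gen obj mor p (b, a) = - nu_gen obj mor p (a, b)"
proof -
  obtain T t where p: "p = (T, t)" by fastforce
  show ?thesis unfolding p nu_gen_eq_sum_wedge sum_negf[symmetric]
    by (rule sum.cong[OF refl]) (rule wedge_flip)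
qed

lemma finite_nu_gen_support: "finite {k. (nu_gen obj mor p k :: 'r::comm_ring_1) \<noteq> 0}"
proof -
  obtain T t where p: "p = (T, t)" by fastforce
  let ?C = "cls_restr obj mor T t"
  let ?P = "\<lambda>e. (?C (cut_comp T {e} (snd e)), ?C (cut_comp T {e} (fst e)))"
  show ?thesis
  proof (cases "finite (edgs T)")
    case False
    then show ?thesis by (simp add: p nu_gen_eq_sum_wedge)
  next
    case True
    have "{k. nu_gen obj mor p k \<noteq> (0::'r)} \<subseteq> ?P ` edgs T \<union> (prod.swap \<circ> ?P) ` edgs T"
    proof
      fix k assume "k \<in> {k. nu_gen obj mor p k \<noteq> (0::'r)}"
      then have "(\<Sum>e\<in>edgs T. wedge (fst (?P e)) (snd (?P e)) k) \<noteq> (0::'r)"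
        by (simp add: p nu_gen_eq_sum_wedge)
      then obtain e where e: "e \<in> edgs T" and "wedge (fst (?P e)) (snd (?P e)) k \<noteq> (0::'r)"
        by (rule sum.not_neutral_contains_not_neutral)
      then have "k = ?P e \<or> k = prod.swap (?P e)" by (auto simp: wedge_def)
      then show "k \<in> ?P ` edgs T \<union> (prod.swap \<circ> ?P) ` edgs T" using e by auto
    qed
    then show ?thesis by (rule finite_subset) (use True in simp)
  qed
qed

section \<open>The co-Jacobi identity for a single tree\<close>

lemma nu_cls_cut_comp:
  assumes ts: "tree_structure obj mor" and T: "is_otree T" and t: "t \<in> obj T"
    and e: "e \<in> edgs T" and x: "x \<in> {fst e, snd e}"
  shows "(nu_cls obj mor (cls_restr obj mor T t (cut_comp T {e} x)) k :: 'r::comm_ring_1) =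
    (\<Sum>f\<in>edgs (cut_comp T {e} x). wedge (cls_restr obj mor T t (cut_comp T {e, f} (snd f)))
       (cls_restr obj mor T t (cut_comp T {e, f} (fst f))) k)"
proof -
  let ?A = "cut_comp T {e} x"
  let ?tA = "restr mor T ?A t"
  have A: "is_otree ?A" by (rule is_otree_cut_comp[OF T e x])
  have "?tA \<in> obj ?A" by (rule restr_in_obj[OF ts A T cut_comp_subset t])
  then have "(nu_cls obj mor (cls_restr obj mor T t ?A) k :: 'r) = nu_gen obj mor (?A, ?tA) k"
    unfolding cls_restr_def using A by (simp add: nu_cls_cls[OF ts] psi_trees_def)
  also have "\<dots> = (\<Sum>f\<in>edgs ?A. wedge (cls_restr obj mor ?A ?tA (cut_comp ?A {f} (snd f)))
      (cls_restr obj mor ?A ?tA (cut_comp ?A {f} (fst f))) k)"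
    by (rule nu_gen_eq_sum_wedge)
  also have "\<dots> = (\<Sum>f\<in>edgs ?A. wedge (cls_restr obj mor T t (cut_comp T {e, f} (snd f)))
      (cls_restr obj mor T t (cut_comp T {e, f} (fst f))) k)"
  proof (rule sum.cong[OF refl])
    fix f assume f: "f \<in> edgs ?A"
    have "cls_restr obj mor ?A ?tA (cut_comp ?A {f} z) = cls_restr obj mor T t (cut_comp T {e, f} z)"
      if z: "z \<in> {fst f, snd f}" for z
    proof -
      have "z \<in> verts ?A" using edge_in_verts[OF is_graph_cut_comp f] z by auto
      then have nest: "cut_comp ?A {f} z = cut_comp T {e, f} z"
        using cut_comp_cut_comp[OF is_otree_is_graph[OF T]] by (simp add: insert_commute)
      have "is_otree (cut_comp ?A {f} z)" by (rule is_otree_cut_comp[OF A f z])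
      then have "restr mor ?A (cut_comp ?A {f} z) ?tA = restr mor T (cut_comp ?A {f} z) t"
        by (rule restr_restr[OF ts _ A T cut_comp_subset cut_comp_subset t])
      then show ?thesis unfolding cls_restr_def nest by simp
    qed
    then show "wedge (cls_restr obj mor ?A ?tA (cut_comp ?A {f} (snd f)))
        (cls_restr obj mor ?A ?tA (cut_comp ?A {f} (fst f))) k =
      wedge (cls_restr obj mor T t (cut_comp T {e, f} (snd f)))
        (cls_restr obj mor T t (cut_comp T {e, f} (fst f))) k"
      by simp
  qed
  finally show ?thesis .
qed

lemma id_tensor_nu0_eq_sum:
  assumes "finite F" "{d. y (a, d) \<noteq> 0} \<subseteq> F"
  shows "id_tensor_nu0 obj mor y (a, b, c) = (\<Sum>d\<in>F. y (a, d) * nu_cls obj mor d (b, c))"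
  unfolding id_tensor_nu0_def using assms by (auto intro!: sum.mono_neutral_left)

lemma sum_wedge_mult:
  fixes N :: "'c \<Rightarrow> 'r::comm_ring_1"
  assumes "finite F" "p \<in> F" "q \<in> F"
  shows "(\<Sum>d\<in>F. wedge p q (a, d) * N d) = of_bool (a = p) * N q - of_bool (a = q) * N p"
proof -
  have "wedge p q (a, d) * N d =
      (if d = q then of_bool (a = p) * N d else 0) - (if d = p then of_bool (a = q) * N d else 0)" for d
    by (simp add: wedge_def algebra_simps)
  then show ?thesis using assms by (simp add: sum_subtractf sum.delta')
qed

definition side_sign :: "otree \<Rightarrow> nat \<times> nat \<Rightarrow> nat \<times> nat \<Rightarrow> 'r::comm_ring_1" where
  "side_sign T e f = (if f \<in> edgs (cut_comp T {e} (fst e)) then 1 else -1)"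

lemma wedge_snd_fst_eq_side_sign:
  "wedge (g (snd f)) (g (fst f)) k = side_sign T f e * wedge (g (far_end T f e)) (g (near_end T f e)) k"
proof (cases "e \<in> edgs (cut_comp T {f} (fst f))")
  case False
  then show ?thesis
    unfolding side_sign_def far_end_def near_end_def by (simp add: wedge_swap[of "g (fst f)"])
qed (simp add: side_sign_def far_end_def near_end_def)

text \<open>The coefficient of \<open>a \<otimes> b \<otimes> c\<close> contributed to \<open>(id \<otimes> \<nu>\<^sub>0) \<nu>\<^sub>0 (T, t)\<close> by cutting first
  \<open>e\<close> and then \<open>f\<close>.\<close>
definition cojac_term :: "(otree \<Rightarrow> 'a set) \<Rightarrow> (otree \<Rightarrow> otree \<Rightarrow> (nat \<Rightarrow> nat) \<Rightarrow> 'a \<Rightarrow> 'a)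
    \<Rightarrow> otree \<Rightarrow> 'a \<Rightarrow> nat \<times> nat \<Rightarrow> nat \<times> nat
    \<Rightarrow> (otree \<times> 'a) set \<Rightarrow> (otree \<times> 'a) set \<Rightarrow> (otree \<times> 'a) set \<Rightarrow> 'r::comm_ring_1" where
  "cojac_term obj mor T t e f a b c = side_sign T e f *
     (of_bool (a = cls_restr obj mor T t (cut_comp T {e} (far_end T e f)))
      * wedge (cls_restr obj mor T t (cut_comp T {e, f} (snd f)))
          (cls_restr obj mor T t (cut_comp T {e, f} (fst f))) (b, c))"

lemma sum_cojac_term:
  assumes ts: "tree_structure obj mor" and T: "is_otree T" and t: "t \<in> obj T" and e: "e \<in> edgs T"
  defines "C \<equiv> cls_restr obj mor T t"
  shows "(\<Sum>f\<in>edgs T - {e}. cojac_term obj mor T t e f a b c) =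
    of_bool (a = C (cut_comp T {e} (snd e))) * nu_cls obj mor (C (cut_comp T {e} (fst e))) (b, c)
    - of_bool (a = C (cut_comp T {e} (fst e)))
      * (nu_cls obj mor (C (cut_comp T {e} (snd e))) (b, c) :: 'r::comm_ring_1)"
proof -
  let ?E = "\<lambda>x. edgs (cut_comp T {e} x)"
  let ?W = "\<lambda>f. wedge (C (cut_comp T {e, f} (snd f))) (C (cut_comp T {e, f} (fst f))) (b, c) :: 'r"
  have fin: "finite (?E x)" for x
    using finite_edgs_otree[OF T] cut_comp_subset(2) by (rule rev_finite_subset)
  have "cojac_term obj mor T t e f a b c = of_bool (a = C (cut_comp T {e} (snd e))) * ?W f"
    if "f \<in> ?E (fst e)" for f
    using that by (simp add: cojac_term_def side_sign_def far_end_def C_def)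
  moreover have "cojac_term obj mor T t e f a b c = - (of_bool (a = C (cut_comp T {e} (fst e))) * ?W f)"
    if "f \<in> ?E (snd e)" for f
    using that cut_comps_edges_disjoint[OF T e]
    by (auto simp: cojac_term_def side_sign_def far_end_def C_def)
  ultimately have "(\<Sum>f\<in>edgs T - {e}. cojac_term obj mor T t e f a b c) =
      of_bool (a = C (cut_comp T {e} (snd e))) * (\<Sum>f\<in>?E (fst e). ?W f)
      - of_bool (a = C (cut_comp T {e} (fst e))) * (\<Sum>f\<in>?E (snd e). ?W f)"
    unfolding cut_comps_edges_cover[OF T e, symmetric]
    by (simp add: sum.union_disjoint[OF fin fin cut_comps_edges_disjoint[OF T e]]
        sum_distrib_left sum_negf)
  also have "\<dots> = of_bool (a = C (cut_comp T {e} (snd e))) * nu_cls obj mor (C (cut_comp T {e} (fst e))) (b, c)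
      - of_bool (a = C (cut_comp T {e} (fst e))) * nu_cls obj mor (C (cut_comp T {e} (snd e))) (b, c)"
    unfolding C_def by (simp add: nu_cls_cut_comp[OF ts T t e])
  finally show ?thesis .
qed

lemma id_tensor_nu0_nu_gen:
  assumes ts: "tree_structure obj mor" and T: "is_otree T" and t: "t \<in> obj T"
  shows "id_tensor_nu0 obj mor (nu_gen obj mor (T, t)) (a, b, c) =
    (\<Sum>e\<in>edgs T. \<Sum>f\<in>edgs T - {e}. (cojac_term obj mor T t e f a b c :: 'r::comm_ring_1))"
proof -
  let ?C = "cls_restr obj mor T t"
  define A1 where "A1 e = ?C (cut_comp T {e} (snd e))" for e
  define A2 where "A2 e = ?C (cut_comp T {e} (fst e))" for e
  let ?y = "nu_gen obj mor (T, t) :: _ \<Rightarrow> 'r"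
  let ?N = "nu_cls obj mor :: _ \<Rightarrow> _ \<Rightarrow> 'r"
  define F where "F = A1 ` edgs T \<union> A2 ` edgs T"
  have finE: "finite (edgs T)" using T by (rule finite_edgs_otree)
  then have finF: "finite F" by (simp add: F_def)
  have y: "?y k = (\<Sum>e\<in>edgs T. wedge (A1 e) (A2 e) k)" for k
    by (simp add: nu_gen_eq_sum_wedge A1_def A2_def)
  have "{d. ?y (a, d) \<noteq> 0} \<subseteq> F"
  proof
    fix d assume "d \<in> {d. ?y (a, d) \<noteq> 0}"
    then obtain e where "e \<in> edgs T" "wedge (A1 e) (A2 e) (a, d) \<noteq> (0::'r)"
      unfolding y by (auto intro: sum.not_neutral_contains_not_neutral)
    moreover from this(2) have "d = A1 e \<or> d = A2 e"
      by (cases "d = A1 e"; cases "d = A2 e") (auto simp: wedge_def)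
    ultimately show "d \<in> F" by (auto simp: F_def)
  qed
  then have "id_tensor_nu0 obj mor ?y (a, b, c) = (\<Sum>d\<in>F. ?y (a, d) * ?N d (b, c))"
    by (rule id_tensor_nu0_eq_sum[OF finF])
  also have "\<dots> = (\<Sum>e\<in>edgs T. \<Sum>d\<in>F. wedge (A1 e) (A2 e) (a, d) * ?N d (b, c))"
    unfolding y sum_distrib_right by (rule sum.swap)
  also have "\<dots> = (\<Sum>e\<in>edgs T. of_bool (a = A1 e) * ?N (A2 e) (b, c) - of_bool (a = A2 e) * ?N (A1 e) (b, c))"
    using finF by (intro sum.cong[OF refl] sum_wedge_mult) (auto simp: F_def)
  also have "\<dots> = (\<Sum>e\<in>edgs T. \<Sum>f\<in>edgs T - {e}. cojac_term obj mor T t e f a b c)"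
    by (intro sum.cong[OF refl]) (simp add: sum_cojac_term[OF ts T t] A1_def A2_def)
  finally show ?thesis .
qed

lemma cyclic_wedge_pair:
  "of_bool (a = P) * wedge Q M (b, c) + of_bool (b = P) * wedge Q M (c, a) + of_bool (c = P) * wedge Q M (a, b)
   + (of_bool (a = Q) * wedge P M (b, c) + of_bool (b = Q) * wedge P M (c, a) + of_bool (c = Q) * wedge P M (a, b))
   = (0::'r::comm_ring_1)"
  unfolding wedge_def
  by (cases "a = P"; cases "b = P"; cases "c = P"; cases "a = Q"; cases "b = Q"; cases "c = Q";
      cases "a = M"; cases "b = M"; cases "c = M"; simp)

lemma cojac_term_pair:
  assumes T: "is_otree T" and e: "e \<in> edgs T" and f: "f \<in> edgs T" and ef: "e \<noteq> f"
  obtains s P Q M where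
    "\<And>a b c. cojac_term obj mor T t e f a b c = s * (of_bool (a = P) * wedge Q M (b, c))"
    "\<And>a b c. cojac_term obj mor T t f e a b c = s * (of_bool (a = Q) * wedge P M (b, c))"
proof
  let ?C = "cls_restr obj mor T t"
  let ?s = "side_sign T e f * side_sign T f e"
    and ?P = "?C (cut_comp T {e} (far_end T e f))" and ?Q = "?C (cut_comp T {f} (far_end T f e))"
    and ?M = "?C (cut_comp T {e, f} (near_end T e f))"
  have fe: "{f, e} = {e, f}" by auto
  have far: "cut_comp T {e, f} (far_end T e f) = cut_comp T {e} (far_end T e f)"
    "cut_comp T {e, f} (far_end T f e) = cut_comp T {f} (far_end T f e)"
    using cut_comp_far_end[OF T e f ef] cut_comp_far_end[OF T f e ef[symmetric]] fe by simp_all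
  have near: "cut_comp T {e, f} (near_end T f e) = cut_comp T {e, f} (near_end T e f)"
    using cut_comp_near_end[OF T e f ef] by simp
  have wedge_e: "wedge (?C (cut_comp T {e, f} (snd e))) (?C (cut_comp T {e, f} (fst e))) k
      = side_sign T e f * wedge ?P ?M k" for k
    using wedge_snd_fst_eq_side_sign[where g = "\<lambda>x. ?C (cut_comp T {e, f} x)" and T = T and f = e and e = f]
    by (simp add: far)
  have wedge_f: "wedge (?C (cut_comp T {e, f} (snd f))) (?C (cut_comp T {e, f} (fst f))) k
      = side_sign T f e * wedge ?Q ?M k" for k
    using wedge_snd_fst_eq_side_sign[where g = "\<lambda>x. ?C (cut_comp T {e, f} x)" and T = T and f = f and e = e]
    by (simp add: far near)
  fix a b c
  show "cojac_term obj mor T t e f a b c = ?s * (of_bool (a = ?P) * wedge ?Q ?M (b, c))"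
    by (simp add: cojac_term_def wedge_f)
  show "cojac_term obj mor T t f e a b c = ?s * (of_bool (a = ?Q) * wedge ?P ?M (b, c))"
    by (simp add: cojac_term_def fe wedge_e)
qed

lemma cojac_term_pair_cancel:
  assumes "is_otree T" "e \<in> edgs T" "f \<in> edgs T" "e \<noteq> f"
  shows "(cojac_term obj mor T t e f a b c + cojac_term obj mor T t e f b c a + cojac_term obj mor T t e f c a b)
       + (cojac_term obj mor T t f e a b c + cojac_term obj mor T t f e b c a + cojac_term obj mor T t f e c a b)
       = (0::'r::comm_ring_1)"
proof -
  obtain s P Q M where
    "\<And>a b c. (cojac_term obj mor T t e f a b c :: 'r) = s * (of_bool (a = P) * wedge Q M (b, c))"
    "\<And>a b c. (cojac_term obj mor T t f e a b c :: 'r) = s * (of_bool (a = Q) * wedge P M (b, c))"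
    using cojac_term_pair[OF assms, where obj = obj and mor = mor and t = t] by blast
  then show ?thesis
    using arg_cong[OF cyclic_wedge_pair[of a P Q M b c], of "\<lambda>z. s * z"]
    by (simp add: algebra_simps)
qed

lemma cyclic_id_tensor_nu0_nu_gen:
  assumes ts: "tree_structure obj mor" and T: "is_otree T" and t: "t \<in> obj T"
  shows "(id_tensor_nu0 obj mor (nu_gen obj mor (T, t)) (a, b, c) :: 'r::comm_ring_1)
       + id_tensor_nu0 obj mor (nu_gen obj mor (T, t)) (b, c, a)
       + id_tensor_nu0 obj mor (nu_gen obj mor (T, t)) (c, a, b) = 0"
proof -
  let ?Y = "cojac_term obj mor T t :: _ \<Rightarrow> _ \<Rightarrow> _ \<Rightarrow> _ \<Rightarrow> _ \<Rightarrow> 'r"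
  let ?D = "Sigma (edgs T) (\<lambda>e. edgs T - {e})"
  let ?g = "\<lambda>(e, f). ?Y e f a b c + ?Y e f b c a + ?Y e f c a b"
  have finE: "finite (edgs T)" using T by (rule finite_edgs_otree)
  have "id_tensor_nu0 obj mor (nu_gen obj mor (T, t)) (a, b, c)
       + id_tensor_nu0 obj mor (nu_gen obj mor (T, t)) (b, c, a)
       + id_tensor_nu0 obj mor (nu_gen obj mor (T, t)) (c, a, b) = (\<Sum>p\<in>?D. ?g p)"
    using finE by (simp add: id_tensor_nu0_nu_gen[OF ts T t] sum.Sigma sum.distrib split_beta)
  also have "\<dots> = 0"
  proof (rule sum_involution_eq_0[where h = prod.swap])
    fix p assume "p \<in> ?D"
    then obtain e f where p: "p = (e, f)" and "e \<in> edgs T" "f \<in> edgs T" "f \<noteq> e" by auto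
    then show "?g (prod.swap p) + ?g p = 0" "prod.swap p \<in> ?D" "prod.swap p \<noteq> p"
      using cojac_term_pair_cancel[OF T, of f e obj mor t a b c] by auto
  qed simp
  finally show ?thesis .
qed

section \<open>Linear extension\<close>

lemma nu0_flip: "nu0 obj mor x (b, a) = - nu0 obj mor x (a, b)"
  unfolding nu0_def sum_negf[symmetric]
  by (rule sum.cong[OF refl]) (simp add: nu_cls_def nu_gen_flip[where b = b and a = a])

lemma id_tensor_nu0_nu0:
  assumes x: "x \<in> (T0 obj mor :: (_ \<Rightarrow> 'r::comm_ring_1) set)"
  shows "id_tensor_nu0 obj mor (nu0 obj mor x) (a, b, c) =
    (\<Sum>c0\<in>{c. x c \<noteq> 0}. x c0 * id_tensor_nu0 obj mor (nu_cls obj mor c0) (a, b, c))"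
proof -
  define S where "S = {c. x c \<noteq> 0}"
  have finS: "finite S" using x by (simp add: T0_def S_def)
  let ?N = "nu_cls obj mor :: _ \<Rightarrow> _ \<Rightarrow> 'r"
  define F where "F = (\<Union>c0\<in>S. snd ` {k. ?N c0 k \<noteq> 0})"
  have finF: "finite F"
    unfolding F_def nu_cls_def using finS finite_nu_gen_support by blast
  have suppN: "{d. ?N c0 (a, d) \<noteq> 0} \<subseteq> F" if "c0 \<in> S" for c0
  proof
    fix d assume "d \<in> {d. ?N c0 (a, d) \<noteq> 0}"
    then have "d \<in> snd ` {k. ?N c0 k \<noteq> 0}" by (metis image_eqI mem_Collect_eq snd_conv)
    then show "d \<in> F" using that unfolding F_def by blast
  qed
  have "{d. nu0 obj mor x (a, d) \<noteq> 0} \<subseteq> F"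
  proof
    fix d assume "d \<in> {d. nu0 obj mor x (a, d) \<noteq> 0}"
    then have "(\<Sum>c0\<in>S. x c0 * ?N c0 (a, d)) \<noteq> 0" by (simp add: nu0_def S_def)
    then obtain c0 where "c0 \<in> S" "x c0 * ?N c0 (a, d) \<noteq> 0"
      by (rule sum.not_neutral_contains_not_neutral)
    then show "d \<in> F" using suppN[of c0] by auto
  qed
  then have "id_tensor_nu0 obj mor (nu0 obj mor x) (a, b, c) =
      (\<Sum>d\<in>F. nu0 obj mor x (a, d) * ?N d (b, c))"
    by (rule id_tensor_nu0_eq_sum[OF finF])
  also have "\<dots> = (\<Sum>c0\<in>S. \<Sum>d\<in>F. x c0 * (?N c0 (a, d) * ?N d (b, c)))"
    unfolding nu0_def S_def[symmetric] sum_distrib_right mult.assoc by (rule sum.swap)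
  also have "\<dots> = (\<Sum>c0\<in>S. x c0 * id_tensor_nu0 obj mor (?N c0) (a, b, c))"
    using id_tensor_nu0_eq_sum[OF finF suppN] by (simp add: sum_distrib_left)
  finally show ?thesis by (simp add: S_def)
qed

lemma cyclic_id_tensor_nu0_nu0:
  assumes ts: "tree_structure obj mor" and x: "x \<in> (T0 obj mor :: (_ \<Rightarrow> 'r::comm_ring_1) set)"
  shows "id_tensor_nu0 obj mor (nu0 obj mor x) (a, b, c) + id_tensor_nu0 obj mor (nu0 obj mor x) (b, c, a)
     + id_tensor_nu0 obj mor (nu0 obj mor x) (c, a, b) = 0"
proof -
  have "id_tensor_nu0 obj mor (nu_cls obj mor c0) (a, b, c) + id_tensor_nu0 obj mor (nu_cls obj mor c0) (b, c, a)
      + id_tensor_nu0 obj mor (nu_cls obj mor c0) (c, a, b) = (0::'r)" if "c0 \<in> classes obj mor" for c0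
  proof -
    obtain T t where p: "(T, t) \<in> psi_trees obj" and c0: "c0 = cls obj mor (T, t)"
      using \<open>c0 \<in> classes obj mor\<close> unfolding classes_def cls_def by (auto elim!: quotientE)
    then have "is_otree T" "t \<in> obj T" by (auto simp: psi_trees_def)
    then show ?thesis
      using cyclic_id_tensor_nu0_nu_gen[OF ts] by (simp add: c0 nu_cls_cls[OF ts p])
  qed
  then show ?thesis
    using x by (simp add: id_tensor_nu0_nu0[OF x] T0_def sum.distrib[symmetric] distrib_left[symmetric] subset_eq)
qed

theorem lemma6p2:
  fixes obj :: "otree \<Rightarrow> 'a set"
    and mor :: "otree \<Rightarrow> otree \<Rightarrow> (nat \<Rightarrow> nat) \<Rightarrow> 'a \<Rightarrow> 'a"
  assumes "tree_structure obj mor"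
  shows "(\<forall>p q. (p, q) \<in> homeo obj mor \<longrightarrow>
            (nu_gen obj mor p :: _ \<Rightarrow> 'r::comm_ring_1) = nu_gen obj mor q)
       \<and> (\<forall>x \<in> (T0 obj mor :: (_ \<Rightarrow> 'r) set). perm2 (nu0 obj mor x) = - nu0 obj mor x)
       \<and> (\<forall>x \<in> (T0 obj mor :: (_ \<Rightarrow> 'r) set).
            (let w = id_tensor_nu0 obj mor (nu0 obj mor x)
             in (\<lambda>k. w k + tau3 w k + tau3 (tau3 w) k) = (\<lambda>k. 0)))"
proof (intro conjI ballI allI impI)
  fix p q assume "(p, q) \<in> homeo obj mor"
  then show "(nu_gen obj mor p :: _ \<Rightarrow> 'r) = nu_gen obj mor q" by (rule nu_gen_homeo[OF assms])
next
  fix x :: "_ \<Rightarrow> 'r"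
  show "perm2 (nu0 obj mor x) = - nu0 obj mor x"
  proof
    fix k
    show "perm2 (nu0 obj mor x) k = (- nu0 obj mor x) k"
      using nu0_flip[where x = x and b = "snd k" and a = "fst k"] by (simp add: perm2_def split_beta)
  qed
next
  fix x :: "_ \<Rightarrow> 'r" assume x: "x \<in> T0 obj mor"
  show "let w = id_tensor_nu0 obj mor (nu0 obj mor x) in (\<lambda>k. w k + tau3 w k + tau3 (tau3 w) k) = (\<lambda>k. 0)"
    unfolding Let_def
  proof
    fix k :: "(otree \<times> 'a) set \<times> (otree \<times> 'a) set \<times> (otree \<times> 'a) set"
    obtain a b c where k: "k = (a, b, c)" by (cases k)
    show "id_tensor_nu0 obj mor (nu0 obj mor x) k + tau3 (id_tensor_nu0 obj mor (nu0 obj mor x)) k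
        + tau3 (tau3 (id_tensor_nu0 obj mor (nu0 obj mor x))) k = 0"
      using cyclic_id_tensor_nu0_nu0[OF assms x, of a b c] by (simp add: k tau3_def)
  qed
qed

end
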